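(* In every orthomodular lattice, for all elements $a,b,c,d$ the following hold: (1) $(a\to_1 b)\cap(b\to_2 c)\cap(c\to_1 d)\cap(d\to_2 a) = (a\equiv b)\cap(b\equiv c)\cap(c\equiv d)$; (2) $(a\to_5 b)\cap(b\to_5 c)\cap(c\to_5 d)\cap(d\to_5 a) = (a\equiv b)\cap(b\equiv c)\cap(c\equiv d)$; (3) $(a\to_1 b)\cap(b\to_2 c)\cap(c\to_1 a)\le a\equiv c$; (4) $(a\equiv b)\cap((b\equiv c)\cup(a\equiv c)) = ((a\equiv b)\cap(b\equiv c))\cup((a\equiv b)\cap(a\equiv c))$; (5) $(a\equiv b)\cap((b\equiv c)\cup(a\equiv c))\le a\equiv c$; (6) $(a\equiv b)\to_0((a\equiv c)\equiv(b\equiv c)) = 1$.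
   Context: An orthomodular lattice is an ortholattice $(L,\cap,\cup,{}',0,1)$ satisfying $a\le b\Rightarrow b=a\cup(a'\cap b)$. Notation: $a\equiv b=(a\cap b)\cup(a'\cap b')$; $a\to_0 b=a'\cup b$; $a\to_1 b=a'\cup(a\cap b)$; $a\to_2 b=b\cup(a'\cap b')$; $a\to_5 b=(a\cap b)\cup(a'\cap b)\cup(a'\cap b')$. *)

theory Defs
  imports Main
begin

class ortholattice = bounded_lattice + uminus +
  assumes compl_inf_bot: "inf x (- x) = bot"
      and compl_sup_top: "sup x (- x) = top"
      and compl_involution: "- (- x) = x"
      and compl_antimono: "x \<le> y \<Longrightarrow> - y \<le> - x"

class orthomodular_lattice = ortholattice +
  assumes orthomodular: "a \<le> b \<Longrightarrow> b = sup a (inf (- a) b)"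

context ortholattice
begin

definition biimp :: "'a \<Rightarrow> 'a \<Rightarrow> 'a" where
  "biimp a b = sup (inf a b) (inf (- a) (- b))"

definition imp0 :: "'a \<Rightarrow> 'a \<Rightarrow> 'a" where
  "imp0 a b = sup (- a) b"

definition imp1 :: "'a \<Rightarrow> 'a \<Rightarrow> 'a" where
  "imp1 a b = sup (- a) (inf a b)"

definition imp2 :: "'a \<Rightarrow> 'a \<Rightarrow> 'a" where
  "imp2 a b = sup b (inf (- a) (- b))"

definition imp5 :: "'a \<Rightarrow> 'a \<Rightarrow> 'a" where
  "imp5 a b = sup (sup (inf a b) (inf (- a) b)) (inf (- a) (- b))"

end

end

theory Submission
  imports Defs
begin

(* Everything rests on one orthomodular identity: if U, W \<le> S and V, X \<le> S', then
   (U \<or> V) \<and> (W \<or> X) = (U \<and> W) \<or> (V \<and> X).  Both joins commute with S, and so does their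
   meet, since its Sasaki projection onto S lies below U \<and> W; splitting the meet along S and S'
   gives the two terms.  With S = a, b or c (or S = U \<or> W when U, V, W, X are cyclically
   orthogonal) this evaluates every meet of implications in the theorem to an element
   (a \<and> b \<and> c \<and> d) \<or> (a' \<and> b' \<and> c' \<and> d') on which all variables agree.  The remaining claims
   follow from transitivity of \<equiv> and from biimp a b \<and> (biimp b c \<or> biimp a c) \<le> biimp a b \<and> biimp b c. *)

context ortholattice
begin

lemma le_compl_commute: "x \<le> - y \<Longrightarrow> y \<le> - x"
  by (metis compl_antimono compl_involution)

lemma compl_sup: "- sup x y = inf (- x) (- y)"
proof (rule order.antisym)
  show "- sup x y \<le> inf (- x) (- y)"
    by (simp add: compl_antimono)
  have "x \<le> - inf (- x) (- y)" and "y \<le> - inf (- x) (- y)"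
    by (rule le_compl_commute, simp)+
  then show "inf (- x) (- y) \<le> - sup x y"
    by (rule le_compl_commute[OF sup_least])
qed

lemma compl_inf: "- inf x y = sup (- x) (- y)"
  by (metis compl_sup compl_involution)

lemma compl_bot: "- bot = top"
  using compl_sup_top[of bot] by simp

lemma compl_eq_bot_iff: "- x = bot \<longleftrightarrow> x = top"
  by (metis compl_bot compl_involution)

lemma biimp_commute: "biimp a b = biimp b a"
  unfolding biimp_def by (simp add: inf_commute)

lemma imp5_le_imp1: "imp5 a b \<le> imp1 a b"
  unfolding imp5_def imp1_def by (simp add: le_supI1 le_supI2)

lemma imp5_le_imp2: "imp5 a b \<le> imp2 a b"
  unfolding imp5_def imp2_def by (simp add: le_supI1 le_supI2)

lemma biimp_le_imp5: "biimp a b \<le> imp5 a b"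
  unfolding biimp_def imp5_def by (simp add: le_supI1 le_supI2)

end

context orthomodular_lattice
begin

lemma orthomodular_dual:
  assumes "a \<le> b"
  shows "a = inf b (sup (- b) a)"
proof -
  have "- a = sup (- b) (inf b (- a))"
    using orthomodular[of "- b" "- a"] assms by (simp add: compl_antimono compl_involution)
  then have "- (- a) = - sup (- b) (inf b (- a))"
    by simp
  then show ?thesis
    by (simp add: compl_sup compl_inf compl_involution)
qed

lemma inf_sup_orthogonal_eq:
  assumes "U \<le> S" and "V \<le> - S"
  shows "inf (sup U V) S = U"
proof -
  have "V \<le> - U"
    using assms compl_antimono order.trans by blast
  then have "V = inf (- U) (sup U V)"
    using orthomodular_dual[of V "- U"] by (simp add: compl_involution)
  then have "inf (- U) (inf (sup U V) S) = inf V S"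
    by (metis inf.assoc)
  also have "\<dots> \<le> inf (- S) S"
    using assms(2) by (rule inf_mono) simp
  also have "\<dots> = bot"
    by (simp add: inf_commute compl_inf_bot)
  finally have "inf (- U) (inf (sup U V) S) = bot"
    by (rule bot_unique[THEN iffD1])
  then show ?thesis
    using orthomodular[of U "inf (sup U V) S"] assms(1) by simp
qed

(* inf (sup T (- S)) S is the Sasaki projection of T onto S; the conclusion says T commutes with S. *)
lemma split_of_sasaki_projection_le:
  assumes "inf (sup T (- S)) S \<le> T"
  shows "T = sup (inf T S) (inf T (- S))"
proof -
  let ?k = "inf T S"
  have "sup T (- S) = sup (- S) (inf S (sup T (- S)))"
    using orthomodular[of "- S" "sup T (- S)"] by (simp add: compl_involution)
  also have "\<dots> \<le> sup (- S) ?k"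
    using assms by (simp add: inf_commute le_supI2)
  finally have T_le: "T \<le> sup ?k (- S)"
    by (simp add: sup_commute)
  have "inf (- ?k) T \<le> inf (- ?k) (sup ?k (- S))"
    using T_le by (rule inf_mono[OF order.refl])
  also have "\<dots> = - S"
    using orthomodular_dual[of "- S" "- ?k"] by (simp add: compl_antimono compl_involution)
  finally have "inf (- ?k) T \<le> inf T (- S)"
    by simp
  moreover have "T = sup ?k (inf (- ?k) T)"
    by (rule orthomodular) simp
  ultimately have "T \<le> sup ?k (inf T (- S))"
    by (metis sup_mono order.refl)
  then show ?thesis
    by (simp add: order.antisym)
qed

lemma inf_sup_sup_separated:
  assumes U: "U \<le> S" and V: "V \<le> - S" and W: "W \<le> S" and X: "X \<le> - S"
  shows "inf (sup U V) (sup W X) = sup (inf U W) (inf V X)"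
proof -
  let ?T = "inf (sup U V) (sup W X)"
  have "inf ?T S = inf (inf (sup U V) S) (inf (sup W X) S)"
    by (simp add: inf_aci)
  also have "\<dots> = inf U W"
    using U V W X by (simp add: inf_sup_orthogonal_eq)
  finally have T_S: "inf ?T S = inf U W" .
  have "inf ?T (- S) = inf (inf (sup V U) (- S)) (inf (sup X W) (- S))"
    by (simp add: inf_aci sup_commute)
  also have "\<dots> = inf V X"
    using U V W X by (simp add: inf_sup_orthogonal_eq compl_involution)
  finally have T_compl: "inf ?T (- S) = inf V X" .
  have "sup ?T (- S) \<le> sup U (- S)"
    using V by (simp add: le_infI1 le_supI2)
  then have "inf (sup ?T (- S)) S \<le> U"
    using inf_sup_orthogonal_eq[of U S "- S"] U by (metis inf_mono order.refl)
  moreover have "sup ?T (- S) \<le> sup W (- S)"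
    using X by (simp add: le_infI2 le_supI2)
  then have "inf (sup ?T (- S)) S \<le> W"
    using inf_sup_orthogonal_eq[of W S "- S"] W by (metis inf_mono order.refl)
  ultimately have "inf (sup ?T (- S)) S \<le> ?T"
    by (simp add: le_infI1 le_infI2 le_supI1)
  then have "?T = sup (inf ?T S) (inf ?T (- S))"
    by (rule split_of_sasaki_projection_le)
  with T_S T_compl show ?thesis
    by simp
qed

lemma inf_sup_sup_orthogonal_cycle:
  assumes "U \<le> - V" and "V \<le> - W" and "W \<le> - X" and "X \<le> - U"
  shows "inf (sup U V) (sup W X) = sup (inf U W) (inf V X)"
proof -
  have "V \<le> - U"
    using assms(1) by (rule le_compl_commute)
  moreover have "X \<le> - W"
    using assms(3) by (rule le_compl_commute)
  ultimately show ?thesis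
    using assms(2,4)
    by (intro inf_sup_sup_separated[where S = "sup U W"]) (simp_all add: compl_sup)
qed

lemma inf_imp1_imp2: "inf (imp1 a b) (imp2 c a) = sup (inf a b) (inf (- c) (- a))"
proof -
  have "inf (sup (inf a b) (- a)) (sup a (inf (- c) (- a)))
      = sup (inf (inf a b) a) (inf (- a) (inf (- c) (- a)))"
    by (rule inf_sup_sup_separated[where S = a]) (simp_all add: le_infI2)
  then show ?thesis
    unfolding imp1_def imp2_def by (simp add: sup_commute inf_aci)
qed

lemma inf_imp1_imp2_cycle:
  "inf (inf (inf (imp1 a b) (imp2 b c)) (imp1 c d)) (imp2 d a)
   = sup (inf (inf (inf a b) c) d) (inf (inf (inf (- a) (- b)) (- c)) (- d))"
proof -
  have "inf (inf (inf (imp1 a b) (imp2 b c)) (imp1 c d)) (imp2 d a)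
      = inf (inf (imp1 a b) (imp2 d a)) (inf (imp1 c d) (imp2 b c))"
    by (simp add: inf_aci)
  also have "\<dots> = inf (sup (inf a b) (inf (- d) (- a))) (sup (inf c d) (inf (- b) (- c)))"
    by (simp add: inf_imp1_imp2)
  also have "\<dots> = sup (inf (inf a b) (inf c d)) (inf (inf (- d) (- a)) (inf (- b) (- c)))"
    by (rule inf_sup_sup_orthogonal_cycle)
      (simp_all add: compl_inf compl_involution le_infI1 le_infI2 le_supI1 le_supI2)
  also have "\<dots> = sup (inf (inf (inf a b) c) d) (inf (inf (inf (- a) (- b)) (- c)) (- d))"
    by (simp add: inf_aci)
  finally show ?thesis .
qed

lemma inf_biimp_biimp:
  "inf (biimp a b) (biimp b c) = sup (inf (inf a b) c) (inf (inf (- a) (- b)) (- c))"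
proof -
  have "inf (biimp a b) (biimp b c)
      = sup (inf (inf a b) (inf b c)) (inf (inf (- a) (- b)) (inf (- b) (- c)))"
    unfolding biimp_def by (rule inf_sup_sup_separated[where S = b]) (simp_all add: le_infI2)
  then show ?thesis
    by (simp add: inf_aci)
qed

lemma biimp_trans: "inf (biimp a b) (biimp b c) \<le> biimp a c"
  unfolding inf_biimp_biimp biimp_def[of a c]
  by (intro sup_mono) (auto intro: le_infI1 le_infI2)

lemma inf_biimp_chain:
  "inf (inf (biimp a b) (biimp b c)) (biimp c d)
   = sup (inf (inf (inf a b) c) d) (inf (inf (inf (- a) (- b)) (- c)) (- d))"
proof -
  have "inf (sup (inf (inf a b) c) (inf (inf (- a) (- b)) (- c))) (sup (inf c d) (inf (- c) (- d)))
      = sup (inf (inf (inf a b) c) (inf c d)) (inf (inf (inf (- a) (- b)) (- c)) (inf (- c) (- d)))"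
    by (rule inf_sup_sup_separated[where S = c]) (simp_all add: le_infI2)
  then show ?thesis
    unfolding inf_biimp_biimp biimp_def[of c d] by (simp add: inf_aci)
qed

lemma inf_biimp_sup_biimp_le:
  "inf (biimp a b) (sup (biimp b c) (biimp a c)) \<le> inf (biimp a b) (biimp b c)"
proof -
  have "inf (biimp a b) (sup (biimp b c) (biimp a c))
      = inf (sup (inf a b) (inf (- a) (- b)))
          (sup (sup (inf b c) (inf a c)) (sup (inf (- b) (- c)) (inf (- a) (- c))))"
    unfolding biimp_def by (simp add: sup_aci)
  also have "\<dots> = sup (inf (inf a b) (sup (inf b c) (inf a c)))
                     (inf (inf (- a) (- b)) (sup (inf (- b) (- c)) (inf (- a) (- c))))"
    by (rule inf_sup_sup_orthogonal_cycle)
      (simp_all add: compl_inf compl_sup compl_involution le_infI1 le_infI2 le_supI1 le_supI2)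
  also have "\<dots> \<le> sup (inf (inf a b) c) (inf (inf (- a) (- b)) (- c))"
    by (intro sup_mono) (auto intro: le_infI1 le_infI2)
  finally show ?thesis
    unfolding inf_biimp_biimp .
qed

lemma inf_imp1_imp2_cycle_eq_inf_biimp:
  "inf (inf (inf (imp1 a b) (imp2 b c)) (imp1 c d)) (imp2 d a)
   = inf (inf (biimp a b) (biimp b c)) (biimp c d)"
  by (simp only: inf_imp1_imp2_cycle inf_biimp_chain)

lemma inf_imp5_cycle_eq_inf_biimp:
  "inf (inf (inf (imp5 a b) (imp5 b c)) (imp5 c d)) (imp5 d a)
   = inf (inf (biimp a b) (biimp b c)) (biimp c d)"
proof (rule order.antisym)
  have "inf (inf (inf (imp5 a b) (imp5 b c)) (imp5 c d)) (imp5 d a)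
      \<le> inf (inf (inf (imp1 a b) (imp2 b c)) (imp1 c d)) (imp2 d a)"
    by (intro inf_mono imp5_le_imp1 imp5_le_imp2)
  then show "inf (inf (inf (imp5 a b) (imp5 b c)) (imp5 c d)) (imp5 d a)
      \<le> inf (inf (biimp a b) (biimp b c)) (biimp c d)"
    by (simp only: inf_imp1_imp2_cycle_eq_inf_biimp)
next
  have "inf (inf (biimp a b) (biimp b c)) (biimp c d) \<le> biimp a d"
    by (meson biimp_trans inf_mono order.refl order.trans)
  then have "inf (inf (biimp a b) (biimp b c)) (biimp c d)
      \<le> inf (inf (inf (biimp a b) (biimp b c)) (biimp c d)) (biimp d a)"
    by (simp add: biimp_commute)
  also have "\<dots> \<le> inf (inf (inf (imp5 a b) (imp5 b c)) (imp5 c d)) (imp5 d a)"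
    by (intro inf_mono biimp_le_imp5)
  finally show "inf (inf (biimp a b) (biimp b c)) (biimp c d)
      \<le> inf (inf (inf (imp5 a b) (imp5 b c)) (imp5 c d)) (imp5 d a)" .
qed

lemma inf_imp1_imp2_imp1_le_biimp: "inf (inf (imp1 a b) (imp2 b c)) (imp1 c a) \<le> biimp a c"
proof -
  have "imp2 a a = top"
    unfolding imp2_def by (simp add: compl_sup_top)
  then have "inf (inf (imp1 a b) (imp2 b c)) (imp1 c a)
      = inf (inf (biimp a b) (biimp b c)) (biimp c a)"
    using inf_imp1_imp2_cycle_eq_inf_biimp[of a b c a] by simp
  also have "\<dots> \<le> biimp a c"
    by (simp add: biimp_commute le_infI2)
  finally show ?thesis .
qed

lemma inf_biimp_sup_biimp_distrib:
  "inf (biimp a b) (sup (biimp b c) (biimp a c))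
   = sup (inf (biimp a b) (biimp b c)) (inf (biimp a b) (biimp a c))"
proof (rule order.antisym)
  show "inf (biimp a b) (sup (biimp b c) (biimp a c))
      \<le> sup (inf (biimp a b) (biimp b c)) (inf (biimp a b) (biimp a c))"
    using inf_biimp_sup_biimp_le by (rule le_supI1)
  show "sup (inf (biimp a b) (biimp b c)) (inf (biimp a b) (biimp a c))
      \<le> inf (biimp a b) (sup (biimp b c) (biimp a c))"
    by (simp add: le_infI2)
qed

lemma inf_biimp_sup_biimp_le_biimp:
  "inf (biimp a b) (sup (biimp b c) (biimp a c)) \<le> biimp a c"
  using inf_biimp_sup_biimp_le biimp_trans by (rule order.trans)

lemma imp0_biimp_biimp_biimp: "imp0 (biimp a b) (biimp (biimp a c) (biimp b c)) = top"
proof -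
  let ?e = "biimp a b" and ?p = "biimp a c" and ?q = "biimp b c"
  have e_le_q: "inf ?e (sup ?p ?q) \<le> inf ?e ?q"
    using inf_biimp_sup_biimp_le by (simp add: sup_commute)
  then have "inf ?e (sup ?p ?q) \<le> ?p"
    using biimp_trans by (rule order.trans)
  moreover have "inf ?e (sup ?p ?q) \<le> ?q"
    using e_le_q by simp
  ultimately have e_le: "inf ?e (sup ?p ?q) \<le> inf ?p ?q"
    by simp
  have "- imp0 ?e (biimp ?p ?q) = inf (inf ?e (sup ?p ?q)) (- inf ?p ?q)"
    unfolding imp0_def biimp_def[of ?p ?q] by (simp add: compl_sup compl_inf compl_involution inf_aci)
  also have "\<dots> \<le> inf (inf ?p ?q) (- inf ?p ?q)"
    using e_le by (rule inf_mono) simp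
  also have "\<dots> = bot"
    by (rule compl_inf_bot)
  finally show ?thesis
    by (simp add: bot_unique compl_eq_bot_iff)
qed

end

theorem theorem4:
  fixes a b c d :: "'a::orthomodular_lattice"
  shows "(inf (inf (inf (imp1 a b) (imp2 b c)) (imp1 c d)) (imp2 d a)
           = inf (inf (biimp a b) (biimp b c)) (biimp c d)) \<and>
         (inf (inf (inf (imp5 a b) (imp5 b c)) (imp5 c d)) (imp5 d a)
           = inf (inf (biimp a b) (biimp b c)) (biimp c d)) \<and>
         (inf (inf (imp1 a b) (imp2 b c)) (imp1 c a) \<le> biimp a c) \<and>
         (inf (biimp a b) (sup (biimp b c) (biimp a c))
           = sup (inf (biimp a b) (biimp b c)) (inf (biimp a b) (biimp a c))) \<and>
         (inf (biimp a b) (sup (biimp b c) (biimp a c)) \<le> biimp a c) \<and>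
         (imp0 (biimp a b) (biimp (biimp a c) (biimp b c)) = top)"
  using inf_imp1_imp2_cycle_eq_inf_biimp inf_imp5_cycle_eq_inf_biimp
    inf_imp1_imp2_imp1_le_biimp inf_biimp_sup_biimp_distrib
    inf_biimp_sup_biimp_le_biimp imp0_biimp_biimp_biimp
  by blast

end
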